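(* For all $x,y\ge 1$ and $n>\max(x,y)$, the minimum possible number of edges in any $(x,y)$ task-dependency graph produced by the $(x,y)$ edge-addition process on $n$ vertices is $n-\min(x,y)$.
   Context: A task-dependency graph is a finite directed acyclic graph (no loops, no multiple edges). A vertex is initial if it has in-degree $0$ and terminal if it has out-degree $0$ (an isolated vertex is both). An $(x,y)$ task-dependency graph has exactly $x$ initial and exactly $y$ terminal vertices. The $(x,y)$ edge-addition process on $n$ vertices: start with the empty graph on $\{1,\dots,n\}$ and repeatedly add, uniformly at random, an edge $(a,b)$ with $a<b$ not yet present; if an addition would cause fewer than $x$ initial vertices or fewer than $y$ terminal vertices, it is cancelled. The process halts if the graph after some edge addition is an $(x,y)$ task-dependency graph, or if no more edges can be added; the produced graph is the final graph (over all possible runs). *)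

theory Defs
  imports Main
begin

definition possible_edges :: "nat \<Rightarrow> (nat \<times> nat) set" where
  "possible_edges n = {(a, b). 1 \<le> a \<and> a < b \<and> b \<le> n}"

definition initial_vertices :: "nat \<Rightarrow> (nat \<times> nat) set \<Rightarrow> nat set" where
  "initial_vertices n E = {v \<in> {1..n}. \<forall>u. (u, v) \<notin> E}"

definition terminal_vertices :: "nat \<Rightarrow> (nat \<times> nat) set \<Rightarrow> nat set" where
  "terminal_vertices n E = {v \<in> {1..n}. \<forall>w. (v, w) \<notin> E}"

text \<open>(x,y) task-dependency graph: exactly x initial and y terminal vertices
  (acyclicity is automatic since all edges go from smaller to larger vertex).\<close>
definition is_tdg :: "nat \<Rightarrow> nat \<Rightarrow> nat \<Rightarrow> (nat \<times> nat) set \<Rightarrow> bool" where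
  "is_tdg x y n E \<longleftrightarrow> card (initial_vertices n E) = x \<and> card (terminal_vertices n E) = y"

text \<open>An edge e can be (successfully, i.e. without cancellation) added to E.\<close>
definition addable :: "nat \<Rightarrow> nat \<Rightarrow> nat \<Rightarrow> (nat \<times> nat) set \<Rightarrow> nat \<times> nat \<Rightarrow> bool" where
  "addable x y n E e \<longleftrightarrow> e \<in> possible_edges n \<and> e \<notin> E \<and>
     card (initial_vertices n (insert e E)) \<ge> x \<and>
     card (terminal_vertices n (insert e E)) \<ge> y"

text \<open>Graphs reachable in some run of the (x,y) edge-addition process on n vertices
  (cancelled additions leave the graph unchanged, so they are not recorded).\<close>
inductive reachable :: "nat \<Rightarrow> nat \<Rightarrow> nat \<Rightarrow> (nat \<times> nat) set \<Rightarrow> bool"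
  for x y n where
  empty: "reachable x y n {}"
| step: "reachable x y n E \<Longrightarrow> \<not> is_tdg x y n E \<Longrightarrow> addable x y n E e
          \<Longrightarrow> reachable x y n (insert e E)"

definition final_graph :: "nat \<Rightarrow> nat \<Rightarrow> nat \<Rightarrow> (nat \<times> nat) set \<Rightarrow> bool" where
  "final_graph x y n E \<longleftrightarrow> reachable x y n E \<and>
     ((E \<noteq> {} \<and> is_tdg x y n E) \<or> (\<forall>e. \<not> addable x y n E e))"

end

theory Submission
  imports Defs
begin

text \<open>Every vertex that is not initial is the head of an edge and every vertex that is not
  terminal is the tail of one, so an (x,y) task-dependency graph on n vertices has at least
  n - min x y edges. For x \<le> y the bound is attained by the path x \<rightarrow> x+1 \<rightarrow> \<dots> \<rightarrow> c,
  c = n+x-y, together with the edges from x to every vertex beyond c; the case y < x follows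
  by reversing the graph under v \<mapsto> n+1-v, which exchanges initial and terminal vertices.
  Such an edge-minimal task-dependency graph E is produced by the process when its edges are
  added in any order: the numbers of initial and terminal vertices only decrease as edges
  are added, so no addition of an edge of E is cancelled, and no proper subgraph of E is
  already a task-dependency graph, as it has too few edges.\<close>

lemma finite_possible_edges: "finite (possible_edges n)"
proof -
  have "possible_edges n \<subseteq> {1..n} \<times> {1..n}" unfolding possible_edges_def by auto
  then show ?thesis by (rule finite_subset) auto
qed

lemma vertices_subset_range:
  "initial_vertices n E \<subseteq> {1..n}" "terminal_vertices n E \<subseteq> {1..n}"
  unfolding initial_vertices_def terminal_vertices_def by auto

lemma card_initial_vertices_antimono:
  assumes "F \<subseteq> E"
  shows "card (initial_vertices n E) \<le> card (initial_vertices n F)"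
  by (rule card_mono) (use assms in \<open>auto simp: initial_vertices_def\<close>)

lemma card_terminal_vertices_antimono:
  assumes "F \<subseteq> E"
  shows "card (terminal_vertices n E) \<le> card (terminal_vertices n F)"
  by (rule card_mono) (use assms in \<open>auto simp: terminal_vertices_def\<close>)

lemma reachable_subset_possible_edges:
  assumes "reachable x y n E"
  shows "E \<subseteq> possible_edges n"
  using assms by induct (auto simp: addable_def)

definition reverse_graph :: "nat \<Rightarrow> (nat \<times> nat) set \<Rightarrow> (nat \<times> nat) set" where
  "reverse_graph n E = (\<lambda>(a, b). (Suc n - b, Suc n - a)) ` E"

lemma reverse_graph_subset_possible_edges:
  assumes "E \<subseteq> possible_edges n"
  shows "reverse_graph n E \<subseteq> possible_edges n"
  using assms unfolding reverse_graph_def possible_edges_def by auto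

lemma card_reverse_graph:
  assumes "E \<subseteq> possible_edges n"
  shows "card (reverse_graph n E) = card E"
  unfolding reverse_graph_def
proof (rule card_image, rule inj_onI, clarsimp)
  fix a b a' b'
  assume "(a, b) \<in> E" "(a', b') \<in> E" "Suc n - b = Suc n - b'" "Suc n - a = Suc n - a'"
  then show "a = a' \<and> b = b'" using assms unfolding possible_edges_def by auto
qed

lemma mem_reverse_graph:
  assumes "E \<subseteq> possible_edges n"
  shows "(a, b) \<in> reverse_graph n E \<longleftrightarrow>
    (a, b) \<in> possible_edges n \<and> (Suc n - b, Suc n - a) \<in> E"
proof
  assume "(a, b) \<in> reverse_graph n E"
  then show "(a, b) \<in> possible_edges n \<and> (Suc n - b, Suc n - a) \<in> E"
    using assms unfolding reverse_graph_def possible_edges_def by (auto simp: Suc_diff_le)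
next
  assume "(a, b) \<in> possible_edges n \<and> (Suc n - b, Suc n - a) \<in> E"
  then show "(a, b) \<in> reverse_graph n E"
    unfolding reverse_graph_def possible_edges_def
    by (auto intro!: image_eqI[where x = "(Suc n - b, Suc n - a)"])
qed

lemma reflection_image_eq:
  fixes A B :: "nat set"
  assumes "A \<subseteq> {1..n}" "B \<subseteq> {1..n}"
    and "\<And>v. v \<in> {1..n} \<Longrightarrow> v \<in> A \<longleftrightarrow> Suc n - v \<in> B"
  shows "A = (\<lambda>v. Suc n - v) ` B"
proof
  show "A \<subseteq> (\<lambda>v. Suc n - v) ` B"
  proof
    fix v assume "v \<in> A"
    then show "v \<in> (\<lambda>v. Suc n - v) ` B"
      using assms by (intro image_eqI[of _ _ "Suc n - v"]) auto
  qed
  show "(\<lambda>v. Suc n - v) ` B \<subseteq> A"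
  proof
    fix u assume "u \<in> (\<lambda>v. Suc n - v) ` B"
    then obtain v where v: "v \<in> B" "u = Suc n - v" by blast
    with assms(2) have "v \<in> {1..n}" by blast
    with v have "u \<in> {1..n}" "Suc n - u = v" by auto
    with v show "u \<in> A" using assms(3) by auto
  qed
qed

lemma initial_vertices_reverse_graph:
  assumes "E \<subseteq> possible_edges n"
  shows "initial_vertices n (reverse_graph n E) = (\<lambda>v. Suc n - v) ` terminal_vertices n E"
proof (rule reflection_image_eq[OF vertices_subset_range(1,2)])
  fix v :: nat assume v: "v \<in> {1..n}"
  have "(u, v) \<in> reverse_graph n E \<longleftrightarrow> (Suc n - v, Suc n - u) \<in> E" for u
    using v assms unfolding mem_reverse_graph[OF assms] possible_edges_def by auto
  moreover have "(Suc n - v, w) \<in> E \<Longrightarrow> w = Suc n - (Suc n - w)" for w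
    using assms unfolding possible_edges_def by auto
  ultimately show "v \<in> initial_vertices n (reverse_graph n E) \<longleftrightarrow>
      Suc n - v \<in> terminal_vertices n E"
    using v unfolding initial_vertices_def terminal_vertices_def by auto metis
qed

lemma terminal_vertices_reverse_graph:
  assumes "E \<subseteq> possible_edges n"
  shows "terminal_vertices n (reverse_graph n E) = (\<lambda>v. Suc n - v) ` initial_vertices n E"
proof (rule reflection_image_eq[OF vertices_subset_range(2,1)])
  fix v :: nat assume v: "v \<in> {1..n}"
  have "(v, w) \<in> reverse_graph n E \<longleftrightarrow> (Suc n - w, Suc n - v) \<in> E" for w
    using v assms unfolding mem_reverse_graph[OF assms] possible_edges_def by auto
  moreover have "(u, Suc n - v) \<in> E \<Longrightarrow> u = Suc n - (Suc n - u)" for u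
    using assms unfolding possible_edges_def by auto
  ultimately show "v \<in> terminal_vertices n (reverse_graph n E) \<longleftrightarrow>
      Suc n - v \<in> initial_vertices n E"
    using v unfolding initial_vertices_def terminal_vertices_def by auto metis
qed

lemma inj_on_reflection: "inj_on (\<lambda>v. Suc n - v) {1..n}"
  by (rule inj_onI) auto

lemma card_initial_vertices_reverse_graph:
  assumes "E \<subseteq> possible_edges n"
  shows "card (initial_vertices n (reverse_graph n E)) = card (terminal_vertices n E)"
  unfolding initial_vertices_reverse_graph[OF assms]
  by (rule card_image[OF inj_on_subset[OF inj_on_reflection vertices_subset_range(2)]])

lemma card_terminal_vertices_reverse_graph:
  assumes "E \<subseteq> possible_edges n"
  shows "card (terminal_vertices n (reverse_graph n E)) = card (initial_vertices n E)"
  unfolding terminal_vertices_reverse_graph[OF assms]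
  by (rule card_image[OF inj_on_subset[OF inj_on_reflection vertices_subset_range(1)]])

lemma is_tdg_reverse_graph:
  assumes "E \<subseteq> possible_edges n" "is_tdg x y n E"
  shows "is_tdg y x n (reverse_graph n E)"
  using assms(2) card_initial_vertices_reverse_graph[OF assms(1)]
    card_terminal_vertices_reverse_graph[OF assms(1)]
  unfolding is_tdg_def by simp

lemma card_edges_ge_non_initial:
  assumes "E \<subseteq> possible_edges n"
  shows "n - card (initial_vertices n E) \<le> card E"
proof -
  have "finite E" using assms finite_possible_edges finite_subset by blast
  have "n - card (initial_vertices n E) = card ({1..n} - initial_vertices n E)"
    using vertices_subset_range(1)[of n E] by (simp add: card_Diff_subset finite_subset)
  also have "\<dots> \<le> card (snd ` E)"
    using \<open>finite E\<close> by (intro card_mono) (force simp: initial_vertices_def)+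
  also have "\<dots> \<le> card E"
    using \<open>finite E\<close> by (rule card_image_le)
  finally show ?thesis .
qed

lemma card_edges_ge_non_terminal:
  assumes "E \<subseteq> possible_edges n"
  shows "n - card (terminal_vertices n E) \<le> card E"
  using card_edges_ge_non_initial[OF reverse_graph_subset_possible_edges[OF assms]]
  by (simp add: card_initial_vertices_reverse_graph card_reverse_graph assms)

lemma card_edges_ge_tdg:
  assumes "E \<subseteq> possible_edges n" "is_tdg x y n E"
  shows "n - min x y \<le> card E"
  using card_edges_ge_non_initial[OF assms(1)] card_edges_ge_non_terminal[OF assms(1)] assms(2)
  unfolding is_tdg_def by (simp add: min_def)

lemma ex_tdg_card_le_if_le:
  assumes "1 \<le> x" "x \<le> y" "y < n"
  shows "\<exists>E. E \<subseteq> possible_edges n \<and> card E \<le> n - x \<and> is_tdg x y n E"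
proof -
  define c where "c = n + x - y"
  have c: "x < c" "c \<le> n" using assms by (auto simp: c_def)
  define E where "E = (\<lambda>v. (v, Suc v)) ` {x..<c} \<union> (\<lambda>v. (x, v)) ` {c<..n}"
  have edge_in: "(a, b) \<in> E \<longleftrightarrow>
      (x \<le> a \<and> a < c \<and> b = Suc a) \<or> (a = x \<and> c < b \<and> b \<le> n)" for a b
    unfolding E_def by auto
  have edge_in': "(a, b) \<in> E \<longleftrightarrow>
      (x < b \<and> b \<le> c \<and> a = b - 1) \<or> (a = x \<and> c < b \<and> b \<le> n)" for a b
    unfolding edge_in by auto
  have "E \<subseteq> possible_edges n"
    using assms c unfolding possible_edges_def by (auto simp: edge_in)
  moreover have "card E \<le> n - x"
  proof -
    have "card E \<le> card ((\<lambda>v. (v, Suc v)) ` {x..<c}) + card ((\<lambda>v. (x, v)) ` {c<..n})"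
      unfolding E_def by (rule card_Un_le)
    also have "\<dots> \<le> card {x..<c} + card {c<..n}"
      by (intro add_mono card_image_le) auto
    finally show ?thesis using c by simp
  qed
  moreover have "initial_vertices n E = {1..x}"
  proof -
    have "(\<forall>u. (u, v) \<notin> E) \<longleftrightarrow> v \<le> x \<or> n < v" for v
      using c unfolding edge_in' by (cases "v \<le> c") auto
    then show ?thesis
      using assms unfolding initial_vertices_def by auto
  qed
  moreover have "terminal_vertices n E = {1..<x} \<union> {c..n}"
  proof -
    have "(\<forall>w. (v, w) \<notin> E) \<longleftrightarrow> v < x \<or> c \<le> v" for v
      using c unfolding edge_in by auto
    then show ?thesis
      using c unfolding terminal_vertices_def by auto
  qed
  moreover have "card ({1..<x} \<union> {c..n}) = y"
    using c assms by (subst card_Un_disjoint) (auto simp: c_def)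
  ultimately show ?thesis unfolding is_tdg_def by auto
qed

lemma ex_tdg_card_le:
  assumes "1 \<le> x" "1 \<le> y" "max x y < n"
  shows "\<exists>E. E \<subseteq> possible_edges n \<and> card E \<le> n - min x y \<and> is_tdg x y n E"
proof (cases "x \<le> y")
  case True
  then show ?thesis using ex_tdg_card_le_if_le[of x y n] assms by simp
next
  case False
  then obtain E where "E \<subseteq> possible_edges n" "card E \<le> n - y" "is_tdg y x n E"
    using ex_tdg_card_le_if_le[of y x n] assms by auto
  moreover have "min x y = y" using False by simp
  ultimately show ?thesis
    using reverse_graph_subset_possible_edges card_reverse_graph is_tdg_reverse_graph by metis
qed

lemma reachable_if_tdg_card_le:
  assumes E: "E \<subseteq> possible_edges n" and card_E: "card E \<le> n - min x y"
    and tdg: "is_tdg x y n E"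
  shows "reachable x y n E"
proof -
  have "finite E" using E finite_possible_edges finite_subset by blast
  have "reachable x y n F" if "F \<subseteq> E" for F
  proof -
    have "finite F" using that \<open>finite E\<close> finite_subset by blast
    then show ?thesis using that
    proof (induct rule: finite_subset_induct')
      case empty
      show ?case by (rule reachable.empty)
    next
      case (insert e F)
      have "card (insert e F) \<le> card E" using insert \<open>finite E\<close> by (intro card_mono) auto
      then have "card F < n - min x y" using insert card_E by simp
      then have "\<not> is_tdg x y n F"
        using card_edges_ge_tdg[of F n x y] insert E by auto
      moreover have "addable x y n F e"
        using insert E tdg card_initial_vertices_antimono[of "insert e F" E n]
          card_terminal_vertices_antimono[of "insert e F" E n]
        unfolding addable_def is_tdg_def by auto
      ultimately show ?case using insert by (intro reachable.step) auto
    qed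
  qed
  then show ?thesis by blast
qed

theorem mainTheorem11:
  fixes x y n :: nat
  assumes "x \<ge> 1" and "y \<ge> 1" and "n > max x y"
  shows "(\<exists>E. final_graph x y n E \<and> is_tdg x y n E \<and> card E = n - min x y) \<and>
         (\<forall>E. final_graph x y n E \<and> is_tdg x y n E \<longrightarrow> card E \<ge> n - min x y)"
proof
  obtain E where E: "E \<subseteq> possible_edges n" "card E \<le> n - min x y" "is_tdg x y n E"
    using ex_tdg_card_le[OF assms] by blast
  have card_E: "card E = n - min x y"
    using E card_edges_ge_tdg[of E n x y] by simp
  have "E \<noteq> {}"
    using card_E assms by (cases "x \<le> y") (auto simp: min_def)
  moreover have "reachable x y n E"
    using reachable_if_tdg_card_le[OF E] .
  ultimately have "final_graph x y n E"
    using E(3) unfolding final_graph_def by simp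
  with E(3) card_E show "\<exists>E. final_graph x y n E \<and> is_tdg x y n E \<and> card E = n - min x y"
    by blast
next
  show "\<forall>E. final_graph x y n E \<and> is_tdg x y n E \<longrightarrow> card E \<ge> n - min x y"
    unfolding final_graph_def
    using card_edges_ge_tdg[OF reachable_subset_possible_edges] by blast
qed

end
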